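(* Let $n\ge3$ and let $f$ be a $\gamma_{tr3}(P_3\square P_n)$-function such that the number of vertices $v$ with $f(v)=\emptyset$ is minimum among all $\gamma_{tr3}(P_3\square P_n)$-functions. If $j\in\{0,1,\dots,n-2\}$ satisfies $|f((1,j))|=2$, then $|f((1,j+1))|=|f((2,j))|=0$.
   Context: $P_m$ denotes the directed path with vertex set $\{0,1,\dots,m-1\}$ and arcs $(i,i+1)$ for $0\le i\le m-2$. The Cartesian product $D_1\square D_2$ has vertex set $V(D_1)\times V(D_2)$, with an arc from $(x_1,y_1)$ to $(x_2,y_2)$ iff either $(x_1,x_2)$ is an arc of $D_1$ and $y_1=y_2$, or $x_1=x_2$ and $(y_1,y_2)$ is an arc of $D_2$. For a digraph $D$ and positive integer $k$, a $k$-rainbow dominating function on $D$ is $f:V(D)\to\mathcal P(\{1,\dots,k\})$ such that every $v$ with $f(v)=\emptyset$ satisfies $\bigcup_{u\in N^-(v)}f(u)=\{1,\dots,k\}$, where $N^-(v)$ is the set of in-neighbors of $v$; its weight is $\sum_v|f(v)|$. It is total if additionally the subdigraph induced by $\{v:f(v)\ne\emptyset\}$ has no isolated vertex (a vertex with neither in- nor out-neighbors in it). $\gamma_{trk}(D)$ is the minimum weight of a total $k$-rainbow dominating function, and a $\gamma_{trk}(D)$-function is one attaining it. *)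

theory Defs
  imports Main
begin

(* A digraph is given by a vertex set Vs and an arc predicate A (A u v: arc from u to v). *)

definition path_vertices :: "nat \<Rightarrow> nat set" where
  "path_vertices m = {0..<m}"

definition path_arc :: "nat \<Rightarrow> nat \<Rightarrow> nat \<Rightarrow> bool" where
  "path_arc m i j \<longleftrightarrow> i + 1 = j \<and> j < m"

definition cart_vertices :: "'a set \<Rightarrow> 'b set \<Rightarrow> ('a \<times> 'b) set" where
  "cart_vertices V1 V2 = V1 \<times> V2"

definition cart_arc :: "('a \<Rightarrow> 'a \<Rightarrow> bool) \<Rightarrow> ('b \<Rightarrow> 'b \<Rightarrow> bool) \<Rightarrow> ('a \<times> 'b) \<Rightarrow> ('a \<times> 'b) \<Rightarrow> bool" where
  "cart_arc A1 A2 p q \<longleftrightarrow>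
     (A1 (fst p) (fst q) \<and> snd p = snd q) \<or> (fst p = fst q \<and> A2 (snd p) (snd q))"

definition in_nbrs :: "'v set \<Rightarrow> ('v \<Rightarrow> 'v \<Rightarrow> bool) \<Rightarrow> 'v \<Rightarrow> 'v set" where
  "in_nbrs Vs A v = {u \<in> Vs. A u v}"

definition rainbow_dom :: "'v set \<Rightarrow> ('v \<Rightarrow> 'v \<Rightarrow> bool) \<Rightarrow> nat \<Rightarrow> ('v \<Rightarrow> nat set) \<Rightarrow> bool" where
  "rainbow_dom Vs A k f \<longleftrightarrow>
     (\<forall>v\<in>Vs. f v \<subseteq> {1..k}) \<and>
     (\<forall>v\<in>Vs. f v = {} \<longrightarrow> (\<Union>u\<in>in_nbrs Vs A v. f u) = {1..k})"

(* total: the subdigraph induced by vertices with nonempty label has no isolated vertex *)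
definition total_rainbow_dom :: "'v set \<Rightarrow> ('v \<Rightarrow> 'v \<Rightarrow> bool) \<Rightarrow> nat \<Rightarrow> ('v \<Rightarrow> nat set) \<Rightarrow> bool" where
  "total_rainbow_dom Vs A k f \<longleftrightarrow>
     rainbow_dom Vs A k f \<and>
     (\<forall>v\<in>Vs. f v \<noteq> {} \<longrightarrow> (\<exists>u\<in>Vs. u \<noteq> v \<and> f u \<noteq> {} \<and> (A u v \<or> A v u)))"

definition rd_weight :: "'v set \<Rightarrow> ('v \<Rightarrow> nat set) \<Rightarrow> nat" where
  "rd_weight Vs f = (\<Sum>v\<in>Vs. card (f v))"

definition gamma_trk :: "'v set \<Rightarrow> ('v \<Rightarrow> 'v \<Rightarrow> bool) \<Rightarrow> nat \<Rightarrow> nat" where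
  "gamma_trk Vs A k = (LEAST w. \<exists>f. total_rainbow_dom Vs A k f \<and> rd_weight Vs f = w)"

definition is_gamma_trk_fun :: "'v set \<Rightarrow> ('v \<Rightarrow> 'v \<Rightarrow> bool) \<Rightarrow> nat \<Rightarrow> ('v \<Rightarrow> nat set) \<Rightarrow> bool" where
  "is_gamma_trk_fun Vs A k f \<longleftrightarrow>
     total_rainbow_dom Vs A k f \<and> rd_weight Vs f = gamma_trk Vs A k"

abbreviation grid_V :: "nat \<Rightarrow> (nat \<times> nat) set" where
  "grid_V n \<equiv> cart_vertices (path_vertices 3) (path_vertices n)"

abbreviation grid_A :: "nat \<Rightarrow> (nat \<times> nat) \<Rightarrow> (nat \<times> nat) \<Rightarrow> bool" where
  "grid_A n \<equiv> cart_arc (path_arc 3) (path_arc n)"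

end

theory Submission
  imports Defs
begin

text \<open>Let \<open>|f p| \<ge> 2\<close> for a \<open>\<gamma>\<^sub>t\<^sub>r\<^sub>k\<close>-function \<open>f\<close> with the fewest empty labels, and pick
  \<open>b \<in> f p\<close>. If every out-neighbour of \<open>p\<close> is labelled, dropping \<open>b\<close> from \<open>f p\<close> keeps \<open>f\<close>
  total rainbow dominating and lowers the weight. If exactly one out-neighbour \<open>w\<close> is
  unlabelled, moving \<open>b\<close> from \<open>p\<close> to \<open>w\<close> keeps the weight and removes an empty label. So \<open>p\<close>
  has at least two unlabelled out-neighbours; in \<open>P\<^sub>3 \<box> P\<^sub>n\<close> the vertex \<open>(1, j)\<close> has
  only the two out-neighbours \<open>(2, j)\<close> and \<open>(1, j + 1)\<close>.\<close>

lemma rainbow_dom_update: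
  assumes f: "rainbow_dom V A k f" and "p \<in> V"
    and "g p \<noteq> {}" "g p \<subseteq> f p"
    and grow: "\<forall>u\<in>V - {p}. f u \<subseteq> g u \<and> g u \<subseteq> {1..k}"
    and out: "\<forall>v\<in>V. A p v \<longrightarrow> g v \<noteq> {}"
  shows "rainbow_dom V A k g"
proof -
  have labels: "\<forall>v\<in>V. g v \<subseteq> {1..k}"
    using f grow \<open>g p \<subseteq> f p\<close> unfolding rainbow_dom_def by blast
  have "(\<Union>u\<in>in_nbrs V A v. g u) = {1..k}" if v: "v \<in> V" "g v = {}" for v
  proof -
    have "f v = {}" "p \<notin> in_nbrs V A v"
      using v \<open>g p \<noteq> {}\<close> grow out unfolding in_nbrs_def by auto
    then have "(\<Union>u\<in>in_nbrs V A v. f u) \<subseteq> (\<Union>u\<in>in_nbrs V A v. g u)"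
      using grow unfolding in_nbrs_def by (intro UN_mono) auto
    moreover have "(\<Union>u\<in>in_nbrs V A v. f u) = {1..k}"
      using f v(1) \<open>f v = {}\<close> unfolding rainbow_dom_def by blast
    moreover have "(\<Union>u\<in>in_nbrs V A v. g u) \<subseteq> {1..k}"
      using labels unfolding in_nbrs_def by blast
    ultimately show ?thesis
      by (metis subset_antisym)
  qed
  with labels show ?thesis
    by (simp add: rainbow_dom_def)
qed

lemma total_rainbow_dom_update:
  assumes f: "total_rainbow_dom V A k f" and "p \<in> V"
    and p_shrink: "g p \<noteq> {}" "g p \<subseteq> f p"
    and grow: "\<forall>u\<in>V - {p}. f u \<subseteq> g u \<and> g u \<subseteq> {1..k}"
    and out: "\<forall>v\<in>V. A p v \<longrightarrow> g v \<noteq> {}"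
    and new: "\<forall>v\<in>V. f v = {} \<longrightarrow> g v \<noteq> {} \<longrightarrow> A p v"
  shows "total_rainbow_dom V A k g"
proof -
  have "rainbow_dom V A k g"
    using f \<open>p \<in> V\<close> p_shrink grow out
    unfolding total_rainbow_dom_def by (blast intro: rainbow_dom_update)
  moreover have "\<exists>u\<in>V. u \<noteq> v \<and> g u \<noteq> {} \<and> (A u v \<or> A v u)"
    if v: "v \<in> V" "g v \<noteq> {}" for v
  proof (cases "f v = {}")
    case True
    then have "A p v" "p \<noteq> v"
      using new v \<open>g p \<noteq> {}\<close> \<open>g p \<subseteq> f p\<close> by auto
    then show ?thesis
      using \<open>p \<in> V\<close> \<open>g p \<noteq> {}\<close> by blast
  next
    case False
    then obtain u where u: "u \<in> V" "u \<noteq> v" "f u \<noteq> {}" "A u v \<or> A v u"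
      using f v(1) unfolding total_rainbow_dom_def by blast
    moreover have "g u \<noteq> {}"
      using grow \<open>g p \<noteq> {}\<close> u(1,3) by (cases "u = p") auto
    ultimately show ?thesis
      by blast
  qed
  ultimately show ?thesis
    unfolding total_rainbow_dom_def by blast
qed

lemma rd_weight_fun_upd:
  assumes "finite V" "p \<in> V"
  shows "rd_weight V (f(p := S)) + card (f p) = rd_weight V f + card S"
proof -
  have "(\<Sum>v\<in>V - {p}. card ((f(p := S)) v)) = (\<Sum>v\<in>V - {p}. card (f v))"
    by (rule sum.cong) auto
  then show ?thesis
    unfolding rd_weight_def
    using sum.remove[OF assms, of "\<lambda>v. card ((f(p := S)) v)"]
      sum.remove[OF assms, of "\<lambda>v. card (f v)"]
    by simp
qed

lemma gamma_trk_le_rd_weight: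
  "total_rainbow_dom V A k g \<Longrightarrow> gamma_trk V A k \<le> rd_weight V g"
  unfolding gamma_trk_def by (rule Least_le) blast

lemma gamma_trk_fun_labels:
  "is_gamma_trk_fun V A k f \<Longrightarrow> \<forall>v\<in>V. f v \<subseteq> {1..k}"
  unfolding is_gamma_trk_fun_def total_rainbow_dom_def rainbow_dom_def by blast

lemma card_Diff_singleton_ge_2:
  assumes "card X \<ge> 2"
  obtains b where "b \<in> X" "X - {b} \<noteq> {}" "card (X - {b}) + 1 = card X"
proof -
  obtain b where b: "b \<in> X"
    using assms by fastforce
  then have "card (X - {b}) + 1 = card X"
    using assms by (simp add: card_Diff_singleton)
  with b assms show thesis
    by (intro that) fastforce+
qed

lemma gamma_trk_fun_empty_out_nbr:
  assumes "finite V" and f: "is_gamma_trk_fun V A k f"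
    and "p \<in> V" "card (f p) \<ge> 2"
  shows "\<exists>v\<in>V. A p v \<and> f v = {}"
proof (rule ccontr)
  assume no_empty: "\<not> ?thesis"
  obtain b where b: "f p - {b} \<noteq> {}" "card (f p - {b}) + 1 = card (f p)"
    using card_Diff_singleton_ge_2[OF \<open>card (f p) \<ge> 2\<close>] by blast
  let ?g = "f(p := f p - {b})"
  have "total_rainbow_dom V A k ?g"
  proof (rule total_rainbow_dom_update[OF _ \<open>p \<in> V\<close>])
    show "total_rainbow_dom V A k f"
      using f unfolding is_gamma_trk_fun_def by blast
    show "\<forall>v\<in>V. A p v \<longrightarrow> ?g v \<noteq> {}"
      using no_empty b(1) by auto
  qed (use b(1) gamma_trk_fun_labels[OF f] in auto)
  then have "gamma_trk V A k \<le> rd_weight V ?g"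
    by (rule gamma_trk_le_rd_weight)
  moreover have "rd_weight V ?g + 1 = rd_weight V f"
    using rd_weight_fun_upd[OF \<open>finite V\<close> \<open>p \<in> V\<close>, of f "f p - {b}"] b(2) by simp
  ultimately show False
    using f unfolding is_gamma_trk_fun_def by simp
qed

lemma gamma_trk_fun_second_empty_out_nbr:
  assumes "finite V"
    and f: "is_gamma_trk_fun V A k f"
    and fewest_empty: "\<forall>g. is_gamma_trk_fun V A k g \<longrightarrow>
           card {v \<in> V. f v = {}} \<le> card {v \<in> V. g v = {}}"
    and "p \<in> V" "card (f p) \<ge> 2"
    and w: "w \<in> V" "A p w" "f w = {}"
  shows "\<exists>v\<in>V. v \<noteq> w \<and> A p v \<and> f v = {}"
proof (rule ccontr)
  assume only_w: "\<not> ?thesis"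
  obtain b where b: "b \<in> f p" "f p - {b} \<noteq> {}" "card (f p - {b}) + 1 = card (f p)"
    using card_Diff_singleton_ge_2[OF \<open>card (f p) \<ge> 2\<close>] by blast
  have "w \<noteq> p"
    using w(3) b(1) by auto
  have labels: "\<forall>v\<in>V. f v \<subseteq> {1..k}"
    using gamma_trk_fun_labels[OF f] .
  then have "b \<in> {1..k}"
    using \<open>p \<in> V\<close> b(1) by blast
  let ?g = "f(p := f p - {b}, w := {b})"
  have "total_rainbow_dom V A k ?g"
  proof (rule total_rainbow_dom_update[OF _ \<open>p \<in> V\<close>])
    show "total_rainbow_dom V A k f"
      using f unfolding is_gamma_trk_fun_def by blast
    show "\<forall>v\<in>V. A p v \<longrightarrow> ?g v \<noteq> {}"
      using only_w b(2) by auto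
    show "\<forall>v\<in>V. f v = {} \<longrightarrow> ?g v \<noteq> {} \<longrightarrow> A p v"
      using w(2) b(1) by auto
    show "\<forall>u\<in>V - {p}. f u \<subseteq> ?g u \<and> ?g u \<subseteq> {1..k}"
      using labels \<open>b \<in> {1..k}\<close> w(3) by auto
  qed (use \<open>w \<noteq> p\<close> b(2) in auto)
  moreover have "rd_weight V ?g = rd_weight V f"
    using rd_weight_fun_upd[OF \<open>finite V\<close> \<open>p \<in> V\<close>, of f "f p - {b}"]
      rd_weight_fun_upd[OF \<open>finite V\<close> \<open>w \<in> V\<close>, of "f(p := f p - {b})" "{b}"]
      b(3) w(3) \<open>w \<noteq> p\<close>
    by simp
  ultimately have "is_gamma_trk_fun V A k ?g"
    using f unfolding is_gamma_trk_fun_def by simp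
  then have "card {v \<in> V. f v = {}} \<le> card {v \<in> V. ?g v = {}}"
    using fewest_empty by blast
  moreover have "{v \<in> V. ?g v = {}} = {v \<in> V. f v = {}} - {w}"
    using b(2) \<open>w \<noteq> p\<close> by auto
  moreover have "card ({v \<in> V. f v = {}} - {w}) < card {v \<in> V. f v = {}}"
    using \<open>finite V\<close> w by (intro card_Diff1_less) auto
  ultimately show False
    by simp
qed

lemma gamma_trk_fun_two_empty_out_nbrs:
  assumes "finite V"
    and f: "is_gamma_trk_fun V A k f"
    and fewest_empty: "\<forall>g. is_gamma_trk_fun V A k g \<longrightarrow>
           card {v \<in> V. f v = {}} \<le> card {v \<in> V. g v = {}}"
    and "p \<in> V" "card (f p) \<ge> 2"
  shows "\<exists>v w. v \<noteq> w \<and> A p v \<and> A p w \<and> f v = {} \<and> f w = {}"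
proof -
  obtain w where "w \<in> V" "A p w" "f w = {}"
    using gamma_trk_fun_empty_out_nbr[OF \<open>finite V\<close> f \<open>p \<in> V\<close> \<open>card (f p) \<ge> 2\<close>] by blast
  then show ?thesis
    using gamma_trk_fun_second_empty_out_nbr[OF assms] by blast
qed

lemma grid_A_iff:
  "grid_A n p q \<longleftrightarrow>
     (fst p + 1 = fst q \<and> fst q < 3 \<and> snd p = snd q) \<or>
     (fst p = fst q \<and> snd p + 1 = snd q \<and> snd q < n)"
  unfolding cart_arc_def path_arc_def by auto

lemma grid_V_iff: "x \<in> grid_V n \<longleftrightarrow> fst x < 3 \<and> snd x < n"
  unfolding cart_vertices_def path_vertices_def by (cases x) auto

theorem lemma4p9:
  fixes n j :: nat and f :: "nat \<times> nat \<Rightarrow> nat set"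
  assumes "n \<ge> 3"
    and "is_gamma_trk_fun (grid_V n) (grid_A n) 3 f"
    and "\<forall>g. is_gamma_trk_fun (grid_V n) (grid_A n) 3 g \<longrightarrow>
           card {v \<in> grid_V n. f v = {}} \<le> card {v \<in> grid_V n. g v = {}}"
    and "j \<le> n - 2"
    and "card (f (1, j)) = 2"
  shows "card (f (1, j + 1)) = 0 \<and> card (f (2, j)) = 0"
proof -
  have "finite (grid_V n)"
    unfolding cart_vertices_def path_vertices_def by simp
  moreover have "(1, j) \<in> grid_V n"
    using assms(1,4) by (simp add: grid_V_iff)
  moreover have "card (f (1, j)) \<ge> 2"
    using assms(5) by simp
  ultimately obtain v w where "v \<noteq> w" "grid_A n (1, j) v" "grid_A n (1, j) w"
    "f v = {}" "f w = {}"
    using gamma_trk_fun_two_empty_out_nbrs[OF _ assms(2,3)] by blast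
  moreover have "\<And>u. grid_A n (1, j) u \<Longrightarrow> u = (2, j) \<or> u = (1, j + 1)"
    by (auto simp: grid_A_iff)
  ultimately show ?thesis
    by (metis card.empty)
qed

end
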